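(* Let $F$ be a field of characteristic $2$ and let $a,b\in F$ with $[F^2(a,b):F^2]=4$. Let $\beta=\langle a+1,a,b,ab\rangle_b$ be the diagonal bilinear form. Then $\beta$ is anisotropic, $G_F(q_\beta)=F^2(a,b)^*$, and $G_F(\beta)=F^2(a)^*$. In particular, $G_F(\beta)\subsetneq G_F(q_\beta)$.
   Context: $\langle c_1,\dots,c_n\rangle_b$ denotes the diagonal bilinear form $\sum c_ix_iy_i$. For a bilinear form $\beta$ on $V$, $q_\beta$ is the totally singular quadratic form $x\mapsto\beta(x,x)$. For a bilinear or quadratic form $\psi$, $G_F(\psi)=\{c\in F^*:\psi\cong c\psi\}$ is its group of similarity factors. *)

theory Defs
  imports "HOL-Analysis.Analysis"
begin

definition is_subfield :: "'a::field set \<Rightarrow> bool" where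
  "is_subfield K \<longleftrightarrow> 0 \<in> K \<and> 1 \<in> K \<and>
     (\<forall>x\<in>K. \<forall>y\<in>K. x + y \<in> K \<and> x - y \<in> K \<and> x * y \<in> K) \<and>
     (\<forall>x\<in>K. inverse x \<in> K)"

definition gen_field :: "'a::field set \<Rightarrow> 'a set \<Rightarrow> 'a set" where
  "gen_field K A = \<Inter>{L. is_subfield L \<and> K \<union> A \<subseteq> L}"

definition squares :: "'a::field set" where
  "squares = range (\<lambda>x. x ^ 2)"

definition ext_degree_eq :: "'a::field set \<Rightarrow> 'a set \<Rightarrow> nat \<Rightarrow> bool" where
  "ext_degree_eq L K n \<longleftrightarrow> (\<exists>v::nat \<Rightarrow> 'a. (\<forall>i<n. v i \<in> L) \<and>
     (\<forall>c. (\<forall>i<n. c i \<in> K) \<and> (\<Sum>i<n. c i * v i) = 0 \<longrightarrow> (\<forall>i<n. c i = 0)) \<and>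
     (\<forall>x\<in>L. \<exists>c. (\<forall>i<n. c i \<in> K) \<and> x = (\<Sum>i<n. c i * v i)))"

definition diag_bil4 :: "'a::field \<Rightarrow> 'a \<Rightarrow> 'a \<Rightarrow> 'a \<Rightarrow> 'a^4 \<Rightarrow> 'a^4 \<Rightarrow> 'a" where
  "diag_bil4 c1 c2 c3 c4 x y =
     c1 * x$1 * y$1 + c2 * x$2 * y$2 + c3 * x$3 * y$3 + c4 * x$4 * y$4"

definition qform :: "('v \<Rightarrow> 'v \<Rightarrow> 'a) \<Rightarrow> 'v \<Rightarrow> 'a" where
  "qform B x = B x x"

definition anisotropic_bil :: "('a::field^'n \<Rightarrow> 'a^'n \<Rightarrow> 'a) \<Rightarrow> bool" where
  "anisotropic_bil B \<longleftrightarrow> (\<forall>x. x \<noteq> 0 \<longrightarrow> B x x \<noteq> 0)"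

definition sim_factors_bil :: "('a::field^'n \<Rightarrow> 'a^'n \<Rightarrow> 'a) \<Rightarrow> 'a set" where
  "sim_factors_bil B = {c. c \<noteq> 0 \<and> (\<exists>M::'a^'n^'n. invertible M \<and>
      (\<forall>x y. B (M *v x) (M *v y) = c * B x y))}"

definition sim_factors_quad :: "('a::field^'n \<Rightarrow> 'a) \<Rightarrow> 'a set" where
  "sim_factors_quad Q = {c. c \<noteq> 0 \<and> (\<exists>M::'a^'n^'n. invertible M \<and>
      (\<forall>x. Q (M *v x) = c * Q x))}"

end

theory Submission
  imports Defs
begin

text \<open>In characteristic 2 squaring is additive, so q_beta(x) = x1^2 + a (x1 + x2)^2 + b x3^2 + ab x4^2
  is the square of x1 + (x1 + x2)\<surd>a + x3\<surd>b + x4\<surd>(ab). Since [F^2(a,b):F^2] = 4, the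
  elements 1, a, b, ab are F^2-independent; hence q_beta is anisotropic and its values are exactly
  F^2(a,b). Multiplication by A + B\<surd>a + C\<surd>b + D\<surd>(ab) is a similarity of q_beta with
  factor A^2 + B^2 a + C^2 b + D^2 ab, which gives G(q_beta) = F^2(a,b)^*; for C = D = 0 it is even a
  similarity of beta. Conversely, a similarity M of beta with factor c = A^2 + B^2 a + C^2 b + D^2 ab
  maps e1, e2 to vectors whose q_beta-values c (a + 1) and c a determine their coordinates, and
  orthogonality of M e1 and M e2 then reads ab (C^2 + D^2 a) = 0, forcing C = D = 0.\<close>

lemma char2_add_self:
  assumes "CHAR('a::field) = 2"
  shows "x + x = (0::'a)"
  using assms by (metis mult_2 mult_zero_left of_nat_CHAR of_nat_numeral)

lemma char2_add_self_left:
  assumes "CHAR('a::field) = 2"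
  shows "x + (x + y) = (y::'a)"
  by (simp add: char2_add_self[OF assms] flip: add.assoc)

lemma char2_eqI:
  assumes "CHAR('a::field) = 2" and "x + y = (0::'a)"
  shows "x = y"
  by (metis assms add_left_cancel char2_add_self)

lemma char2_diff_eq_add:
  assumes "CHAR('a::field) = 2"
  shows "x - y = x + (y::'a)"
  by (metis assms add_diff_cancel_left' char2_add_self_left diff_add_cancel)

lemma char2_power2_add:
  assumes "CHAR('a::field) = 2"
  shows "(x + y)^2 = x^2 + (y::'a)^2"
proof -
  have "(x + y)^2 = x^2 + y^2 + (x*y + x*y)"
    by (simp add: power2_eq_square algebra_simps)
  then show ?thesis by (simp add: char2_add_self[OF assms])
qed

lemma char2_power2_inj:
  assumes "CHAR('a::field) = 2" and "x^2 = (y::'a)^2"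
  shows "x = y"
proof (rule char2_eqI[OF assms(1)])
  have "(x + y)^2 = 0"
    using assms by (simp add: char2_power2_add char2_add_self)
  then show "x + y = 0" by simp
qed

lemma subfield_0: "is_subfield K \<Longrightarrow> 0 \<in> K"
  and subfield_1: "is_subfield K \<Longrightarrow> 1 \<in> K"
  and subfield_add: "is_subfield K \<Longrightarrow> x \<in> K \<Longrightarrow> y \<in> K \<Longrightarrow> x + y \<in> K"
  and subfield_diff: "is_subfield K \<Longrightarrow> x \<in> K \<Longrightarrow> y \<in> K \<Longrightarrow> x - y \<in> K"
  and subfield_mult: "is_subfield K \<Longrightarrow> x \<in> K \<Longrightarrow> y \<in> K \<Longrightarrow> x * y \<in> K"
  and subfield_inverse: "is_subfield K \<Longrightarrow> x \<in> K \<Longrightarrow> inverse x \<in> K"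
  by (simp_all add: is_subfield_def)

lemma subfield_divide: "is_subfield K \<Longrightarrow> x \<in> K \<Longrightarrow> y \<in> K \<Longrightarrow> x / y \<in> K"
  by (simp add: divide_inverse subfield_inverse subfield_mult)

lemma power2_in_squares [simp]: "x^2 \<in> squares"
  by (simp add: squares_def)

lemma squaresE:
  assumes "x \<in> squares"
  obtains y where "x = y^2"
  using assms by (auto simp: squares_def)

lemma is_subfield_squares:
  assumes "CHAR('a::field) = 2"
  shows "is_subfield (squares :: 'a set)"
  unfolding is_subfield_def
proof (intro conjI ballI)
  show "(0::'a) \<in> squares" "(1::'a) \<in> squares"
    using power2_in_squares[of "0::'a"] power2_in_squares[of "1::'a"] by simp_all
next
  fix x y :: 'a assume "x \<in> squares" "y \<in> squares"
  then obtain u v where "x = u^2" "y = v^2" by (metis squaresE)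
  then show "x + y \<in> squares" "x - y \<in> squares" "x * y \<in> squares"
    by (simp_all flip: char2_power2_add[OF assms] power_mult_distrib
        add: char2_diff_eq_add[OF assms])
next
  fix x :: 'a assume "x \<in> squares"
  then show "inverse x \<in> squares"
    by (metis power2_in_squares power_inverse squaresE)
qed

definition adjoin :: "'a::field set \<Rightarrow> 'a \<Rightarrow> 'a set" where
  "adjoin K e = {p + q * e | p q. p \<in> K \<and> q \<in> K}"

lemma mem_adjoin_iff: "x \<in> adjoin K e \<longleftrightarrow> (\<exists>p\<in>K. \<exists>q\<in>K. x = p + q * e)"
  by (auto simp: adjoin_def)

lemma subset_adjoin: "is_subfield K \<Longrightarrow> K \<subseteq> adjoin K e"
  unfolding subset_iff mem_adjoin_iff by (metis subfield_0 mult_zero_left add_0_right)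

lemma self_in_adjoin: "is_subfield K \<Longrightarrow> e \<in> adjoin K e"
  unfolding mem_adjoin_iff by (metis subfield_0 subfield_1 mult_1 add_0)

lemma adjoin_subset:
  assumes "is_subfield L" "K \<subseteq> L" "e \<in> L"
  shows "adjoin K e \<subseteq> L"
  using assms by (auto simp: mem_adjoin_iff intro!: subfield_add subfield_mult)

lemma adjoin_eq_self: "is_subfield K \<Longrightarrow> e \<in> K \<Longrightarrow> adjoin K e = K"
  by (simp add: adjoin_subset subset_adjoin subset_antisym)

lemma is_subfield_adjoin:
  assumes char: "CHAR('a::field) = 2"
    and K: "is_subfield K" "squares \<subseteq> K" and e: "e^2 \<in> K"
  shows "is_subfield (adjoin K (e::'a))"
  unfolding is_subfield_def
proof (intro conjI ballI)
  show "0 \<in> adjoin K e" "1 \<in> adjoin K e"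
    using subset_adjoin K subfield_0 subfield_1 by blast+
next
  fix x y assume "x \<in> adjoin K e" "y \<in> adjoin K e"
  then obtain p q p' q' where pq: "p \<in> K" "q \<in> K" "p' \<in> K" "q' \<in> K"
    and xy: "x = p + q * e" "y = p' + q' * e"
    by (auto simp: mem_adjoin_iff)
  have "x + y = (p + p') + (q + q') * e" "x - y = (p - p') + (q - q') * e"
    "x * y = (p * p' + q * q' * e^2) + (p * q' + q * p') * e"
    unfolding xy by (simp_all add: algebra_simps power2_eq_square)
  then show "x + y \<in> adjoin K e" "x - y \<in> adjoin K e" "x * y \<in> adjoin K e"
    unfolding mem_adjoin_iff using pq e K(1)
    by (blast intro: subfield_add subfield_diff subfield_mult)+
next
  fix x assume "x \<in> adjoin K e"
  then obtain p q where pq: "p \<in> K" "q \<in> K" "x = p + q * e"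
    by (auto simp: mem_adjoin_iff)
  have "inverse x = (inverse x)^2 * x"
    by (cases "x = 0") (simp_all add: power2_eq_square)
  also have "\<dots> = (inverse x)^2 * p + ((inverse x)^2 * q) * e"
    by (simp add: pq(3) algebra_simps)
  finally show "inverse x \<in> adjoin K e"
    unfolding mem_adjoin_iff using pq K by (meson power2_in_squares subfield_mult subsetD)
qed

lemma adjoin_coeffs_unique:
  assumes K: "is_subfield K" and e: "e \<notin> K"
    and coeffs: "p \<in> K" "q \<in> K" "p' \<in> K" "q' \<in> K"
    and eq: "p + q * e = p' + q' * e"
  shows "p = p' \<and> q = q'"
proof (cases "q = q'")
  case False
  then have "e = (p' - p) / (q - q')"
    using eq by (simp add: field_simps)
  then have "e \<in> K"
    using K coeffs by (simp add: subfield_diff subfield_divide)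
  with e show ?thesis by contradiction
qed (use eq in simp)

lemma adjoin_three_dependent:
  assumes K: "is_subfield K"
    and x: "x0 \<in> adjoin K e" "x1 \<in> adjoin K e" "x2 \<in> adjoin K e"
  shows "\<exists>c0\<in>K. \<exists>c1\<in>K. \<exists>c2\<in>K. (c0 \<noteq> 0 \<or> c1 \<noteq> 0 \<or> c2 \<noteq> 0)
    \<and> c0 * x0 + c1 * x1 + c2 * x2 = 0"
proof -
  obtain p0 q0 p1 q1 p2 q2 where
    coeffs: "p0 \<in> K" "q0 \<in> K" "p1 \<in> K" "q1 \<in> K" "p2 \<in> K" "q2 \<in> K"
    and xs: "x0 = p0 + q0 * e" "x1 = p1 + q1 * e" "x2 = p2 + q2 * e"
    using x by (auto simp: mem_adjoin_iff)
  have closed: "- u \<in> K" "u * v - v' * u' \<in> K"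
    if "u \<in> K" "v \<in> K" "u' \<in> K" "v' \<in> K" for u v u' v'
    using subfield_diff[OF K subfield_0[OF K] that(1)]
      subfield_diff[OF K subfield_mult[OF K that(1,2)] subfield_mult[OF K that(4,3)]]
    by simp_all
  have witness: "\<exists>c0\<in>K. \<exists>c1\<in>K. \<exists>c2\<in>K. (c0 \<noteq> 0 \<or> c1 \<noteq> 0 \<or> c2 \<noteq> 0)
      \<and> c0 * x0 + c1 * x1 + c2 * x2 = 0"
    if "c0 \<in> K" "c1 \<in> K" "c2 \<in> K" "c0 \<noteq> 0 \<or> c1 \<noteq> 0 \<or> c2 \<noteq> 0"
      "c0 * x0 + c1 * x1 + c2 * x2 = 0" for c0 c1 c2
    using that by blast
  consider "p0 * q1 - p1 * q0 \<noteq> 0"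
    | "p0 * q1 - p1 * q0 = 0" "p0 \<noteq> 0 \<or> p1 \<noteq> 0"
    | "p0 * q1 - p1 * q0 = 0" "q0 \<noteq> 0 \<or> q1 \<noteq> 0"
    | "p0 = 0" "q0 = 0"
    by blast
  then show ?thesis
  proof cases
    case 1
    \<comment> \<open>the cross product of the coordinate vectors (p_i, q_i)\<close>
    show ?thesis
      by (rule witness[of "p1 * q2 - p2 * q1" "p2 * q0 - p0 * q2" "p0 * q1 - p1 * q0"])
        (use 1 coeffs closed in \<open>simp_all add: xs algebra_simps\<close>)
  next
    case 2
    show ?thesis
      by (rule witness[of p1 "- p0" 0])
        (use 2 coeffs closed subfield_0[OF K] in \<open>auto simp: xs algebra_simps\<close>)
  next
    case 3
    show ?thesis
      by (rule witness[of q1 "- q0" 0])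
        (use 3 coeffs closed subfield_0[OF K] in \<open>auto simp: xs algebra_simps\<close>)
  next
    case 4
    show ?thesis
      by (rule witness[of 1 0 0]) (use 4 subfield_0[OF K] subfield_1[OF K] in \<open>simp_all add: xs\<close>)
  qed
qed

lemma ext_degree_4_not_subset_adjoin:
  assumes K: "is_subfield K" and deg: "ext_degree_eq L K 4"
  shows "\<not> L \<subseteq> adjoin K e"
proof
  assume L: "L \<subseteq> adjoin K e"
  obtain v :: "nat \<Rightarrow> 'a" where v: "\<forall>i<4. v i \<in> L"
    and indep: "\<forall>c. (\<forall>i<4. c i \<in> K) \<and> (\<Sum>i<4. c i * v i) = 0 \<longrightarrow> (\<forall>i<4. c i = 0)"
    using deg unfolding ext_degree_eq_def by (elim exE conjE) (rule that)
  have "v 0 \<in> adjoin K e" "v 1 \<in> adjoin K e" "v 2 \<in> adjoin K e"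
    using v L by auto
  then obtain c0 c1 c2 where c: "c0 \<in> K" "c1 \<in> K" "c2 \<in> K" "c0 \<noteq> 0 \<or> c1 \<noteq> 0 \<or> c2 \<noteq> 0"
    and rel: "c0 * v 0 + c1 * v 1 + c2 * v 2 = 0"
    using adjoin_three_dependent[OF K] by blast
  define c where "c = (\<lambda>i::nat. if i = 0 then c0 else if i = 1 then c1 else if i = 2 then c2 else 0)"
  have "(\<forall>i<4. c i \<in> K) \<and> (\<Sum>i<4. c i * v i) = 0"
    using c rel subfield_0[OF K] by (simp add: c_def numeral_eq_Suc less_Suc_eq)
  then have "\<forall>i<4. c i = 0"
    using indep by blast
  then have "c 0 = 0" "c 1 = 0" "c 2 = 0"
    by simp_all
  with c(4) show False
    by (simp add: c_def)
qed

lemma gen_field_eqI: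
  assumes "is_subfield L" "K \<union> A \<subseteq> L"
    and "\<And>L'. is_subfield L' \<Longrightarrow> K \<union> A \<subseteq> L' \<Longrightarrow> L \<subseteq> L'"
  shows "gen_field K A = L"
  using assms unfolding gen_field_def by blast

lemma vector_4 [simp]:
  "(vector [x, y, z, w] :: ('a::zero)^4) $ 1 = x"
  "(vector [x, y, z, w] :: ('a::zero)^4) $ 2 = y"
  "(vector [x, y, z, w] :: ('a::zero)^4) $ 3 = z"
  "(vector [x, y, z, w] :: ('a::zero)^4) $ 4 = w"
  unfolding vector_def by simp_all

lemma matrix_vector_mult_4:
  "((M::'a::comm_ring_1^4^4) *v x) $ i = M$i$1 * x$1 + M$i$2 * x$2 + M$i$3 * x$3 + M$i$4 * x$4"
  by (simp add: matrix_vector_mult_def sum_4)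

lemma invertible_if_similarity_of_anisotropic:
  fixes M :: "'a::field^'n^'n"
  assumes "anisotropic_bil B" "B 0 0 = 0" "c \<noteq> 0" "\<And>x. B (M *v x) (M *v x) = c * B x x"
  shows "invertible M"
proof -
  have "x = 0" if "M *v x = 0" for x
  proof -
    have "B x x = 0"
      using assms(2) assms(3) assms(4)[of x] that by simp
    with assms(1) show "x = 0"
      unfolding anisotropic_bil_def by blast
  qed
  then show ?thesis
    by (simp add: invertible_left_inverse matrix_left_invertible_ker)
qed

locale biquadratic =
  fixes a b :: "'a::field"
  assumes char2: "CHAR('a) = 2"
    and degree: "ext_degree_eq (gen_field squares {a, b}) squares 4"
begin

abbreviation Ka :: "'a set" where "Ka \<equiv> adjoin squares a"
abbreviation Kab :: "'a set" where "Kab \<equiv> adjoin Ka b"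
abbreviation \<beta> :: "'a^4 \<Rightarrow> 'a^4 \<Rightarrow> 'a" where "\<beta> \<equiv> diag_bil4 (a + 1) a b (a * b)"

lemma two_eq_zero: "(2::'a) = 0"
  using char2 by (metis of_nat_CHAR of_nat_numeral)

text \<open>An identity x = y valid only in characteristic 2 is proved via char2_eqI as x + y = 0:
  in the ring normal form of x + y the monomials then cancel in pairs by these rules.\<close>
lemmas char2_cancel = two_eq_zero char2_add_self[OF char2] char2_add_self_left[OF char2]

lemmas subfield_squares = is_subfield_squares[OF char2]

lemma is_subfield_Ka: "is_subfield Ka"
  by (simp add: char2 is_subfield_adjoin subfield_squares)

lemma Ka_subset_Kab: "Ka \<subseteq> Kab"
  by (simp add: is_subfield_Ka subset_adjoin)

lemma is_subfield_Kab: "is_subfield Kab"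
proof (rule is_subfield_adjoin[OF char2 is_subfield_Ka])
  show "squares \<subseteq> Ka" "b^2 \<in> Ka"
    using subset_adjoin[OF subfield_squares, of a] power2_in_squares by blast+
qed

lemma gen_field_a: "gen_field squares {a} = Ka"
proof (rule gen_field_eqI[OF is_subfield_Ka])
  show "squares \<union> {a} \<subseteq> Ka"
    using subset_adjoin self_in_adjoin subfield_squares by blast
  show "Ka \<subseteq> L" if "is_subfield L" "squares \<union> {a} \<subseteq> L" for L
    using that by (intro adjoin_subset) auto
qed

lemma gen_field_ab: "gen_field squares {a, b} = Kab"
proof (rule gen_field_eqI[OF is_subfield_Kab])
  show "squares \<union> {a, b} \<subseteq> Kab"
    using Ka_subset_Kab subset_adjoin[OF subfield_squares] self_in_adjoin
      subfield_squares is_subfield_Ka by blast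
  show "Kab \<subseteq> L" if "is_subfield L" "squares \<union> {a, b} \<subseteq> L" for L
    using that by (intro adjoin_subset) auto
qed

lemma a_notin_squares: "a \<notin> squares"
proof
  assume "a \<in> squares"
  then have "Kab = adjoin squares b"
    by (simp add: adjoin_eq_self subfield_squares)
  then show False
    using ext_degree_4_not_subset_adjoin[OF subfield_squares] degree gen_field_ab by auto
qed

lemma b_notin_Ka: "b \<notin> Ka"
proof
  assume "b \<in> Ka"
  then have "Kab = Ka"
    by (simp add: adjoin_eq_self is_subfield_Ka)
  then show False
    using ext_degree_4_not_subset_adjoin[OF subfield_squares] degree gen_field_ab by auto
qed

text \<open>The square of A + B\<surd>a + C\<surd>b + D\<surd>(ab) in characteristic 2.\<close>
definition sqnorm :: "'a \<Rightarrow> 'a \<Rightarrow> 'a \<Rightarrow> 'a \<Rightarrow> 'a" where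
  "sqnorm A B C D = A^2 + B^2 * a + (C^2 + D^2 * a) * b"

lemma Kab_eq_range_sqnorm: "Kab = {sqnorm A B C D | A B C D. True}"
proof -
  have "x \<in> Kab \<longleftrightarrow> (\<exists>A B C D. x = sqnorm A B C D)" for x
  proof
    assume "x \<in> Kab"
    then obtain p q p' q' where "p \<in> squares" "q \<in> squares" "p' \<in> squares" "q' \<in> squares"
      and "x = (p + q * a) + (p' + q' * a) * b"
      by (auto simp: mem_adjoin_iff)
    then show "\<exists>A B C D. x = sqnorm A B C D"
      unfolding sqnorm_def by (metis squaresE)
  next
    assume "\<exists>A B C D. x = sqnorm A B C D"
    then obtain A B C D where "x = (A^2 + B^2 * a) + (C^2 + D^2 * a) * b"
      unfolding sqnorm_def by blast
    moreover have "A^2 + B^2 * a \<in> Ka" "C^2 + D^2 * a \<in> Ka"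
      by (auto simp: mem_adjoin_iff intro!: bexI[OF _ power2_in_squares])
    ultimately show "x \<in> Kab"
      unfolding mem_adjoin_iff[of x] by blast
  qed
  then show ?thesis by blast
qed

lemma sqnorm_in_Kab: "sqnorm A B C D \<in> Kab"
  using Kab_eq_range_sqnorm by blast

lemma sqnorm_eq_iff:
  "sqnorm A B C D = sqnorm A' B' C' D' \<longleftrightarrow> A = A' \<and> B = B' \<and> C = C' \<and> D = D'"
proof
  assume "sqnorm A B C D = sqnorm A' B' C' D'"
  then have "A^2 + B^2 * a = A'^2 + B'^2 * a \<and> C^2 + D^2 * a = C'^2 + D'^2 * a"
    unfolding sqnorm_def
    by (intro adjoin_coeffs_unique[OF is_subfield_Ka b_notin_Ka])
      (auto simp: mem_adjoin_iff squares_def)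
  then have "A^2 = A'^2 \<and> B^2 = B'^2 \<and> C^2 = C'^2 \<and> D^2 = D'^2"
    using adjoin_coeffs_unique[OF subfield_squares a_notin_squares power2_in_squares
        power2_in_squares power2_in_squares power2_in_squares]
    by blast
  then show "A = A' \<and> B = B' \<and> C = C' \<and> D = D'"
    using char2_power2_inj[OF char2] by blast
qed simp

lemma qform_beta: "\<beta> x x = sqnorm (x$1) (x$1 + x$2) (x$3) (x$4)"
  unfolding diag_bil4_def sqnorm_def char2_power2_add[OF char2]
  by (simp add: power2_eq_square algebra_simps)

lemma anisotropic_beta: "anisotropic_bil \<beta>"
  unfolding anisotropic_bil_def
proof (intro allI impI)
  fix x :: "'a^4" assume "x \<noteq> 0"
  then have "\<not> (x$1 = 0 \<and> x$1 + x$2 = 0 \<and> x$3 = 0 \<and> x$4 = 0)"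
    by (auto simp: vec_eq_iff forall_4)
  then have "sqnorm (x$1) (x$1 + x$2) (x$3) (x$4) \<noteq> sqnorm 0 0 0 0"
    unfolding sqnorm_eq_iff by blast
  then show "\<beta> x x \<noteq> 0"
    by (simp add: qform_beta sqnorm_def)
qed

text \<open>The matrix of multiplication by A + B\<surd>a + C\<surd>b + D\<surd>(ab) in the coordinates
  (x1, x1 + x2, x3, x4) of qform_beta, written back in the standard coordinates.\<close>
definition mult_matrix :: "'a \<Rightarrow> 'a \<Rightarrow> 'a \<Rightarrow> 'a \<Rightarrow> 'a^4^4" where
  "mult_matrix A B C D = vector [
     vector [A + B * a, B * a, C * b, D * a * b],
     vector [B * a + B, B * a + A, C * b + D * b, D * a * b + C * b],
     vector [C + D * a, D * a, A, B * a],
     vector [C + D, C, B, A]]"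

lemma mult_matrix_similarity:
  "\<beta> (mult_matrix A B C D *v x) (mult_matrix A B C D *v x) = sqnorm A B C D * \<beta> x x"
  by (rule char2_eqI[OF char2])
    (simp add: diag_bil4_def sqnorm_def mult_matrix_def matrix_vector_mult_4
      algebra_simps power2_eq_square char2_cancel)

lemma mult_matrix_bilinear_similarity:
  "\<beta> (mult_matrix A B 0 0 *v x) (mult_matrix A B 0 0 *v y) = sqnorm A B 0 0 * \<beta> x y"
  by (rule char2_eqI[OF char2])
    (simp add: diag_bil4_def sqnorm_def mult_matrix_def matrix_vector_mult_4
      algebra_simps power2_eq_square char2_cancel)

lemma beta_0_0: "\<beta> 0 0 = 0"
  by (simp add: diag_bil4_def)

lemma sim_factors_quad_beta: "sim_factors_quad (qform \<beta>) = Kab - {0}"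
proof (intro equalityI subsetI)
  fix c assume "c \<in> sim_factors_quad (qform \<beta>)"
  then obtain M :: "'a^4^4" where "c \<noteq> 0" and M: "\<And>x. \<beta> (M *v x) (M *v x) = c * \<beta> x x"
    unfolding sim_factors_quad_def qform_def by blast
  have "\<beta> (vector [1, 1, 0, 0]) (vector [1, 1, 0, 0]) = 1"
    by (simp add: diag_bil4_def char2_cancel)
  then have "c = \<beta> (M *v vector [1, 1, 0, 0]) (M *v vector [1, 1, 0, 0])"
    using M by simp
  with \<open>c \<noteq> 0\<close> show "c \<in> Kab - {0}"
    by (simp add: qform_beta sqnorm_in_Kab)
next
  fix c assume "c \<in> Kab - {0}"
  then obtain A B C D where "c = sqnorm A B C D" "c \<noteq> 0"
    using Kab_eq_range_sqnorm by auto
  then show "c \<in> sim_factors_quad (qform \<beta>)"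
    unfolding sim_factors_quad_def qform_def
    using mult_matrix_similarity
      invertible_if_similarity_of_anisotropic[OF anisotropic_beta beta_0_0] by blast
qed

lemma sqnorm_times_a_plus_1:
  "sqnorm A B C D * (a + 1) = sqnorm (A + B * a) (A + B) (C + D * a) (C + D)"
  by (rule char2_eqI[OF char2])
    (simp add: sqnorm_def algebra_simps power2_eq_square char2_cancel)

lemma sqnorm_times_a: "sqnorm A B C D * a = sqnorm (B * a) A (D * a) C"
  by (simp add: sqnorm_def algebra_simps power2_eq_square)

lemma sim_factors_bil_beta_subset: "sim_factors_bil \<beta> \<subseteq> Ka - {0}"
proof
  fix c assume "c \<in> sim_factors_bil \<beta>"
  then obtain M :: "'a^4^4" where "c \<noteq> 0" "invertible M"
    and M: "\<And>x y. \<beta> (M *v x) (M *v y) = c * \<beta> x y"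
    unfolding sim_factors_bil_def by blast
  then have "c \<in> Kab"
    using sim_factors_quad_beta unfolding sim_factors_quad_def qform_def by blast
  then obtain A B C D where c: "c = sqnorm A B C D"
    using Kab_eq_range_sqnorm by auto
  define u w where "u = M *v vector [1, 0, 0, 0]" and "w = M *v vector [0, 1, 0, 0]"
  have "sqnorm (u$1) (u$1 + u$2) (u$3) (u$4) = sqnorm (A + B * a) (A + B) (C + D * a) (C + D)"
    using M unfolding u_def qform_beta[symmetric] sqnorm_times_a_plus_1[symmetric] c
    by (simp add: diag_bil4_def)
  then have u: "u$1 = A + B * a" "u$1 + u$2 = A + B" "u$3 = C + D * a" "u$4 = C + D"
    unfolding sqnorm_eq_iff by blast+
  then have u2: "u$2 = (A + B * a) + (A + B)"
    by (metis char2_add_self_left[OF char2])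
  have "sqnorm (w$1) (w$1 + w$2) (w$3) (w$4) = sqnorm (B * a) A (D * a) C"
    using M unfolding w_def qform_beta[symmetric] sqnorm_times_a[symmetric] c
    by (simp add: diag_bil4_def)
  then have w: "w$1 = B * a" "w$1 + w$2 = A" "w$3 = D * a" "w$4 = C"
    unfolding sqnorm_eq_iff by blast+
  then have w2: "w$2 = B * a + A"
    by (metis char2_add_self_left[OF char2])
  have "a * b * sqnorm C D 0 0 = \<beta> u w"
    by (rule char2_eqI[OF char2])
      (simp add: diag_bil4_def sqnorm_def u(1,3,4) u2 w(1,3,4) w2
        algebra_simps power2_eq_square char2_cancel)
  also have "\<dots> = 0"
    unfolding u_def w_def M by (simp add: diag_bil4_def)
  finally have "sqnorm C D 0 0 = sqnorm 0 0 0 0"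
    using a_notin_squares b_notin_Ka subfield_0[OF subfield_squares] subfield_0[OF is_subfield_Ka]
    by (auto simp: sqnorm_def)
  then have "c = A^2 + B^2 * a"
    unfolding sqnorm_eq_iff c by (simp add: sqnorm_def)
  with \<open>c \<noteq> 0\<close> show "c \<in> Ka - {0}"
    by (auto simp: mem_adjoin_iff intro!: bexI[OF _ power2_in_squares])
qed

lemma sim_factors_bil_beta: "sim_factors_bil \<beta> = Ka - {0}"
proof (intro equalityI subsetI)
  fix c assume "c \<in> Ka - {0}"
  then obtain A B where "c = sqnorm A B 0 0" "c \<noteq> 0"
    by (auto simp: mem_adjoin_iff sqnorm_def elim!: squaresE)
  then show "c \<in> sim_factors_bil \<beta>"
    unfolding sim_factors_bil_def
    using mult_matrix_bilinear_similarity
      invertible_if_similarity_of_anisotropic[OF anisotropic_beta beta_0_0] by blast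
qed (use sim_factors_bil_beta_subset in blast)

lemma sim_factors_bil_psubset_quad: "sim_factors_bil \<beta> \<subset> sim_factors_quad (qform \<beta>)"
proof -
  have "b \<in> Kab - {0}" "b \<notin> Ka"
    using b_notin_Ka self_in_adjoin[OF is_subfield_Ka] subfield_0[OF is_subfield_Ka] by auto
  then show ?thesis
    unfolding sim_factors_bil_beta sim_factors_quad_beta using Ka_subset_Kab by blast
qed

end

theorem mainTheorem3:
  fixes a b :: "'a::field"
  assumes "CHAR('a) = 2"
    and "ext_degree_eq (gen_field squares {a, b}) squares 4"
  shows "anisotropic_bil (diag_bil4 (a + 1) a b (a * b))
    \<and> sim_factors_quad (qform (diag_bil4 (a + 1) a b (a * b))) = gen_field squares {a, b} - {0}
    \<and> sim_factors_bil (diag_bil4 (a + 1) a b (a * b)) = gen_field squares {a} - {0}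
    \<and> sim_factors_bil (diag_bil4 (a + 1) a b (a * b))
        \<subset> sim_factors_quad (qform (diag_bil4 (a + 1) a b (a * b)))"
proof -
  interpret biquadratic a b
    using assms by unfold_locales
  show ?thesis
    using anisotropic_beta sim_factors_quad_beta sim_factors_bil_beta sim_factors_bil_psubset_quad
    by (simp add: gen_field_a gen_field_ab)
qed

end
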